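(* Let $s,r,R$ be positive integers with $s,r\ge 2$. If there is a non-trivial $R$-perfect code in $\mathbb F_q^{s\times r}$ with respect to the NRT metric, then $(R+1)(r+1)\le sr$.
   Context: $q$ is a prime power, $\mathbb F_q^{s\times r}$ the set of $s\times r$ matrices over $\mathbb F_q$ with rows in $\mathbb F_q^{1\times r}$. For a row $y=(y_1,\dots,y_r)$, the NRT weight is $w(y)=\max\{j: y_j\neq 0\}$ if $y\ne0$ and $w(0)=0$; for a matrix, $w(x)=\sum_i w(x_i)$. The NRT metric is $d(x,y)=w(x-y)$; $B(c,R)=\{x: d(x,c)\le R\}$. A code $C$ is $R$-perfect if the balls $B(c,R)$, $c\in C$, are pairwise disjoint and cover $\mathbb F_q^{s\times r}$; non-trivial means $|C|>1$ and $C\ne\mathbb F_q^{s\times r}$. *)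

theory Defs
  imports Main
begin

text \<open>Matrices in F_q^{s x r} are represented as functions  nat \<Rightarrow> nat \<Rightarrow> 'a  (row i, column j,
  0-based), vanishing outside {0..<s} x {0..<r}.\<close>

definition mat_space :: "nat \<Rightarrow> nat \<Rightarrow> (nat \<Rightarrow> nat \<Rightarrow> 'a::zero) set" where
  "mat_space s r = {x. \<forall>i j. (s \<le> i \<or> r \<le> j) \<longrightarrow> x i j = 0}"

definition row_weight :: "nat \<Rightarrow> (nat \<Rightarrow> 'a::zero) \<Rightarrow> nat" where
  "row_weight r y = Max (insert 0 {Suc j | j. j < r \<and> y j \<noteq> 0})"

definition nrt_weight :: "nat \<Rightarrow> nat \<Rightarrow> (nat \<Rightarrow> nat \<Rightarrow> 'a::zero) \<Rightarrow> nat" where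
  "nrt_weight s r x = (\<Sum>i<s. row_weight r (x i))"

definition nrt_dist :: "nat \<Rightarrow> nat \<Rightarrow> (nat \<Rightarrow> nat \<Rightarrow> 'a::ab_group_add) \<Rightarrow> (nat \<Rightarrow> nat \<Rightarrow> 'a) \<Rightarrow> nat" where
  "nrt_dist s r x y = nrt_weight s r (x - y)"

definition nrt_ball :: "nat \<Rightarrow> nat \<Rightarrow> (nat \<Rightarrow> nat \<Rightarrow> 'a::ab_group_add) \<Rightarrow> nat \<Rightarrow> (nat \<Rightarrow> nat \<Rightarrow> 'a) set" where
  "nrt_ball s r c R = {x \<in> mat_space s r. nrt_dist s r x c \<le> R}"

definition perfect_code :: "nat \<Rightarrow> nat \<Rightarrow> nat \<Rightarrow> (nat \<Rightarrow> nat \<Rightarrow> 'a::ab_group_add) set \<Rightarrow> bool" where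
  "perfect_code s r R C \<longleftrightarrow> C \<subseteq> mat_space s r
     \<and> (\<forall>c\<in>C. \<forall>c'\<in>C. c \<noteq> c' \<longrightarrow> nrt_ball s r c R \<inter> nrt_ball s r c' R = {})
     \<and> (\<Union>c\<in>C. nrt_ball s r c R) = mat_space s r"

definition nontrivial_code :: "nat \<Rightarrow> nat \<Rightarrow> (nat \<Rightarrow> nat \<Rightarrow> 'a::zero) set \<Rightarrow> bool" where
  "nontrivial_code s r C \<longleftrightarrow> card C > 1 \<and> C \<noteq> mat_space s r"

end

theory Submission
  imports Defs
begin

text \<open>Two distinct codewords \<open>c, c'\<close> of an \<open>R\<close>-perfect code cannot have the row weights of
  \<open>c - c'\<close> split into two groups of total weight at most \<open>R\<close> each: the word agreeing with \<open>c\<close>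
  on one group of rows and with \<open>c'\<close> on the other would lie in both balls. Perturb a codeword
  \<open>c\<^sub>0\<close> by an error \<open>e\<close> of weight \<open>R + 1\<close> and let \<open>c\<close> be the codeword whose ball contains
  \<open>c\<^sub>0 + e\<close>. Row weights are ultrametric, so each row of \<open>c - c\<^sub>0\<close> weighs at most the larger of
  the corresponding rows of \<open>e\<close> and of the residual \<open>c\<^sub>0 + e - c\<close>; unsplittability then forces
  \<open>c - c\<^sub>0\<close> to carry weight at least \<open>R\<close> on the rows where \<open>e\<close> vanishes.

  If \<open>s \<le> R + 1\<close>, an error touching every row leaves no such rows. Otherwise an error with a
  single entry in the first column of \<open>R + 1\<close> rows gives \<open>R \<le> r (s - R - 1)\<close>. In the equality
  case \<open>c\<close> is determined on those rows and has full weight on the others, so the codewords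
  obtained from the row sets \<open>{0..R}\<close> and \<open>{1..R+1}\<close> differ only on row \<open>0\<close> and on the last
  \<open>s - R - 1\<close> rows, a splittable difference. Hence \<open>R < r (s - R - 1)\<close>, which is the claim.\<close>

lemma row_weight_le_iff: "row_weight r y \<le> k \<longleftrightarrow> (\<forall>j<r. y j \<noteq> 0 \<longrightarrow> j < k)"
proof -
  have "{Suc j |j. j < r \<and> y j \<noteq> 0} \<subseteq> {..r}" by auto
  then have "finite (insert 0 {Suc j |j. j < r \<and> y j \<noteq> 0})"
    using finite_subset by blast
  then show ?thesis unfolding row_weight_def by (auto simp: Max_le_iff)
qed

lemma row_weight_le: "row_weight r y \<le> r"
  by (simp add: row_weight_le_iff)

lemma row_weight_eq_0_iff: "row_weight r y = 0 \<longleftrightarrow> (\<forall>j<r. y j = 0)"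
  using row_weight_le_iff[of r y 0] by auto

lemma row_weight_diff_le_max:
  fixes a b :: "nat \<Rightarrow> 'a::ab_group_add"
  shows "row_weight r (a - b) \<le> max (row_weight r a) (row_weight r b)"
  unfolding row_weight_le_iff
proof (intro allI impI)
  fix j assume "j < r" "(a - b) j \<noteq> 0"
  then have "j < r \<and> (a j \<noteq> 0 \<or> b j \<noteq> 0)" by auto
  then show "j < max (row_weight r a) (row_weight r b)"
    using row_weight_le_iff[of r a j] row_weight_le_iff[of r b j] by auto
qed

lemma row_weight_minus_commute:
  fixes a b :: "nat \<Rightarrow> 'a::ab_group_add"
  shows "row_weight r (a - b) = row_weight r (b - a)"
proof -
  have "(a - b) j = 0 \<longleftrightarrow> (b - a) j = 0" for j by auto
  then show ?thesis unfolding row_weight_def by (simp only:)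
qed

lemma row_weight_diff_self [simp]: "row_weight r (a - a :: nat \<Rightarrow> 'a::ab_group_add) = 0"
  unfolding row_weight_def by simp

lemma nrt_dist_eq_sum: "nrt_dist s r x y = (\<Sum>i<s. row_weight r (x i - y i))"
  by (simp add: nrt_dist_def nrt_weight_def)

lemma mat_space_row_eqI:
  fixes x y :: "nat \<Rightarrow> nat \<Rightarrow> 'a::ab_group_add"
  assumes "x \<in> mat_space s r" "y \<in> mat_space s r" "row_weight r (x i - y i) = 0"
  shows "x i = y i"
proof
  fix j
  show "x i j = y i j"
  proof (cases "j < r")
    case True
    then show ?thesis using assms(3) by (simp add: row_weight_eq_0_iff)
  next
    case False
    then show ?thesis using assms(1,2) by (simp add: mat_space_def)
  qed
qed

lemma exists_bounded_composition:
  fixes s n r :: nat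
  shows "s \<le> n \<Longrightarrow> n \<le> s * r \<Longrightarrow> \<exists>u. (\<forall>i<s. 1 \<le> u i \<and> u i \<le> r) \<and> (\<Sum>i<s. u i) = n"
proof (induction s arbitrary: n)
  case (Suc s)
  have "1 \<le> r" using Suc.prems by (cases "r = 0") simp_all
  then have "s \<le> s * r" by simp
  define k where "k = min r (n - s)"
  have k: "1 \<le> k" "k \<le> r" "k \<le> n" using Suc.prems \<open>1 \<le> r\<close> by (auto simp: k_def)
  have "k = r \<and> r \<le> n - s \<or> k = n - s" by (auto simp: k_def)
  then have "s \<le> n - k" "n - k \<le> s * r" using Suc.prems k \<open>s \<le> s * r\<close> by auto
  then obtain u where u: "\<forall>i<s. 1 \<le> u i \<and> u i \<le> r" "(\<Sum>i<s. u i) = n - k"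
    using Suc.IH by blast
  have "(\<Sum>i<s. (u(s := k)) i) = n - k" using u(2) by simp
  then have "(\<Sum>i<Suc s. (u(s := k)) i) = n" using k by simp
  moreover have "\<forall>i<Suc s. 1 \<le> (u(s := k)) i \<and> (u(s := k)) i \<le> r"
    using u(1) k by (simp add: less_Suc_eq)
  ultimately show ?case by blast
qed simp

definition profile_matrix :: "nat \<Rightarrow> (nat \<Rightarrow> nat) \<Rightarrow> nat \<Rightarrow> nat \<Rightarrow> 'a::{zero,one}" where
  "profile_matrix s u = (\<lambda>i j. if i < s \<and> Suc j = u i then 1 else 0)"

lemma profile_matrix_in_mat_space:
  "(\<And>i. i < s \<Longrightarrow> u i \<le> r) \<Longrightarrow> profile_matrix s u \<in> mat_space s r"
  unfolding mat_space_def profile_matrix_def by fastforce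

lemma row_weight_profile_matrix:
  assumes "i < s" "u i \<le> r"
  shows "row_weight r (profile_matrix s u i :: nat \<Rightarrow> 'a::zero_neq_one) = u i"
proof (rule antisym)
  show "row_weight r (profile_matrix s u i :: nat \<Rightarrow> 'a) \<le> u i"
    by (simp add: row_weight_le_iff profile_matrix_def)
  show "u i \<le> row_weight r (profile_matrix s u i :: nat \<Rightarrow> 'a)"
  proof (cases "u i")
    case (Suc j)
    then have "\<not> row_weight r (profile_matrix s u i :: nat \<Rightarrow> 'a) \<le> j"
      using assms unfolding row_weight_le_iff by (auto simp: profile_matrix_def intro!: exI[of _ j])
    then show ?thesis using Suc by simp
  qed simp
qed

lemma nrt_weight_profile_matrix:
  "(\<And>i. i < s \<Longrightarrow> u i \<le> r) \<Longrightarrow>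
    nrt_weight s r (profile_matrix s u :: nat \<Rightarrow> nat \<Rightarrow> 'a::zero_neq_one) = (\<Sum>i<s. u i)"
  unfolding nrt_weight_def by (simp add: row_weight_profile_matrix)

definition splittable :: "nat \<Rightarrow> ('i \<Rightarrow> nat) \<Rightarrow> 'i set \<Rightarrow> bool" where
  "splittable R m I \<longleftrightarrow> (\<exists>A\<subseteq>I. sum m A \<le> R \<and> sum m (I - A) \<le> R)"

lemma perfect_code_diff_not_splittable:
  assumes pc: "perfect_code s r R C" and c: "c \<in> C" "c' \<in> C" "c \<noteq> c'"
  shows "\<not> splittable R (\<lambda>i. row_weight r (c i - c' i)) {..<s}"
proof
  let ?m = "\<lambda>i. row_weight r (c i - c' i)"
  assume "splittable R ?m {..<s}"
  then obtain A where A: "A \<subseteq> {..<s}" "sum ?m A \<le> R" "sum ?m ({..<s} - A) \<le> R"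
    unfolding splittable_def by blast
  define y where "y = (\<lambda>i. if i \<in> A then c i else c' i)"
  have "y \<in> mat_space s r"
    using pc c unfolding perfect_code_def mat_space_def y_def by auto
  have "nrt_dist s r y c' = (\<Sum>i<s. if i \<in> A then ?m i else 0)"
    unfolding nrt_dist_eq_sum by (rule sum.cong) (auto simp: y_def)
  also have "\<dots> = sum ?m A"
    using A(1) by (simp add: sum.inter_restrict[symmetric] Int_absorb1)
  finally have "nrt_dist s r y c' \<le> R" using A by simp
  moreover have "nrt_dist s r y c = (\<Sum>i<s. if i \<in> A then 0 else ?m i)"
    unfolding nrt_dist_eq_sum
    by (rule sum.cong) (auto simp: y_def row_weight_minus_commute)
  then have "nrt_dist s r y c \<le> R"
    using A by (simp add: sum.If_cases Diff_eq)
  ultimately have "y \<in> nrt_ball s r c R \<inter> nrt_ball s r c' R"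
    using \<open>y \<in> mat_space s r\<close> unfolding nrt_ball_def by auto
  with pc c show False unfolding perfect_code_def by blast
qed

text \<open>The row weights \<open>m\<close> of \<open>c - c\<^sub>0\<close>, \<open>u\<close> of the error \<open>e\<close> and \<open>v\<close> of the residual
  \<open>c\<^sub>0 + e - c\<close>, when the codeword \<open>c \<noteq> c\<^sub>0\<close> decodes \<open>c\<^sub>0 + e\<close>.\<close>

locale decoding_weights =
  fixes I :: "'i set" and R :: nat and m u v :: "'i \<Rightarrow> nat"
  assumes finite: "finite I"
    and unsplittable: "\<not> splittable R m I"
    and dominated: "\<And>i. i \<in> I \<Longrightarrow> m i \<le> max (u i) (v i)"
    and error_weight: "sum u I = R + 1"
    and decoding_weight: "sum v I \<le> R"
begin

lemma error_weight_outside: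
  assumes "B \<subseteq> I" "k \<in> B" "u k \<noteq> 0"
  shows "sum u (I - B) \<le> R"
proof -
  have "u k \<le> sum u B"
    using assms finite finite_subset by (blast intro: member_le_sum)
  moreover have "sum u I = sum u (I - B) + sum u B"
    using assms(1) finite by (rule sum.subset_diff)
  ultimately show ?thesis using assms(3) error_weight by linarith
qed

lemma decoding_le_error:
  assumes "i \<in> I" "u i \<noteq> 0"
  shows "v i \<le> u i"
proof (rule ccontr)
  assume "\<not> v i \<le> u i"
  define A where "A = {j \<in> I. u j < v j}"
  have "A \<subseteq> I" "i \<in> A" using assms \<open>\<not> v i \<le> u i\<close> by (auto simp: A_def)
  have "sum m A \<le> sum v A"
    using dominated by (intro sum_mono) (fastforce simp: A_def max_def)
  also have "\<dots> \<le> sum v I"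
    using \<open>A \<subseteq> I\<close> finite by (intro sum_mono2) auto
  finally have "sum m A \<le> R" using decoding_weight by simp
  moreover have "sum m (I - A) \<le> sum u (I - A)"
    using dominated by (intro sum_mono) (fastforce simp: A_def max_def)
  moreover have "sum u (I - A) \<le> R"
    using \<open>A \<subseteq> I\<close> \<open>i \<in> A\<close> assms(2) by (rule error_weight_outside)
  ultimately show False
    using unsplittable \<open>A \<subseteq> I\<close> unfolding splittable_def by auto
qed

lemma weight_le_error: "i \<in> I \<Longrightarrow> u i \<noteq> 0 \<Longrightarrow> m i \<le> u i"
  using dominated decoding_le_error by fastforce

lemma weight_off_error_support:
  assumes "k \<in> I" "u k \<noteq> 0"
  shows "R + 1 \<le> sum m {i \<in> I. u i = 0} + m k"
proof -
  define A where "A = insert k {i \<in> I. u i = 0}"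
  have "A \<subseteq> I" using assms by (auto simp: A_def)
  have "sum m (I - A) \<le> sum u (I - A)"
    using weight_le_error by (intro sum_mono) (auto simp: A_def)
  also have "\<dots> \<le> R"
    using error_weight_outside[OF \<open>A \<subseteq> I\<close> _ assms(2)] by (simp add: A_def)
  finally have "\<not> sum m A \<le> R"
    using unsplittable \<open>A \<subseteq> I\<close> unfolding splittable_def by auto
  moreover have "sum m A = m k + sum m {i \<in> I. u i = 0}"
    unfolding A_def using assms finite by (subst sum.insert) auto
  ultimately show ?thesis by linarith
qed

lemma decoding_vanishes_on_error_support:
  assumes "R \<le> sum m {i \<in> I. u i = 0}" "i \<in> I" "u i \<noteq> 0"
  shows "v i = 0"
proof -
  define Z where "Z = {i \<in> I. u i = 0}"
  have "Z \<subseteq> I" by (auto simp: Z_def)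
  have "sum m Z \<le> sum v Z"
    using dominated by (intro sum_mono) (fastforce simp: Z_def)
  moreover have "sum v I = sum v (I - Z) + sum v Z"
    using \<open>Z \<subseteq> I\<close> finite by (rule sum.subset_diff)
  ultimately have "sum v (I - Z) = 0"
    using assms(1) decoding_weight by (simp add: Z_def)
  then show ?thesis
    using assms(2,3) finite by (simp add: Z_def)
qed

end

lemma perfect_code_decoding:
  assumes pc: "perfect_code s r R C" and c0: "c0 \<in> C"
    and e: "e \<in> mat_space s r" "nrt_weight s r e = R + 1"
  obtains c where "c \<in> C" "c \<noteq> c0"
    "decoding_weights {..<s} R (\<lambda>i. row_weight r (c i - c0 i)) (\<lambda>i. row_weight r (e i))
       (\<lambda>i. row_weight r ((\<lambda>j. c0 i j + e i j) - c i))"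
proof -
  let ?x = "\<lambda>i j. c0 i j + e i j"
  have "?x \<in> mat_space s r"
    using pc c0 e unfolding perfect_code_def mat_space_def by auto
  then obtain c where c: "c \<in> C" "nrt_dist s r ?x c \<le> R"
    using pc unfolding perfect_code_def nrt_ball_def by blast
  have "nrt_dist s r ?x c0 = R + 1"
    using e(2) by (simp add: nrt_dist_def nrt_weight_def fun_diff_def)
  with c have "c \<noteq> c0" by auto
  have "c i - c0 i = e i - (?x i - c i)" for i
    by (simp add: fun_eq_iff)
  then have "row_weight r (c i - c0 i) \<le> max (row_weight r (e i)) (row_weight r (?x i - c i))" for i
    by (simp add: row_weight_diff_le_max)
  moreover have "(\<Sum>i<s. row_weight r (e i)) = R + 1"
    using e(2) by (simp add: nrt_weight_def)
  ultimately show ?thesis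
    using that[OF c(1) \<open>c \<noteq> c0\<close>] c(2) pc c \<open>c \<noteq> c0\<close> perfect_code_diff_not_splittable[OF pc c(1) c0]
    by (auto simp: decoding_weights_def nrt_dist_eq_sum)
qed

lemma perfect_code_radius_lt_size:
  assumes "perfect_code s r R C" "c \<in> C" "c' \<in> C" "c \<noteq> c'"
  shows "R < s * r"
proof (rule ccontr)
  let ?m = "\<lambda>i. row_weight r (c i - c' i)"
  assume "\<not> R < s * r"
  moreover have "sum ?m {..<s} \<le> s * r"
    using sum_bounded_above[of "{..<s}" ?m r] by (simp add: row_weight_le)
  ultimately have "splittable R ?m {..<s}"
    unfolding splittable_def by (intro exI[of _ "{..<s}"]) auto
  with perfect_code_diff_not_splittable[OF assms] show False by contradiction
qed

lemma perfect_code_radius_lt_rows: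
  fixes C :: "(nat \<Rightarrow> nat \<Rightarrow> 'a::{ab_group_add,zero_neq_one}) set"
  assumes pc: "perfect_code s r R C" and c0: "c0 \<in> C" and "2 \<le> s" "R < s * r"
  shows "R + 1 < s"
proof (rule ccontr)
  assume "\<not> R + 1 < s"
  then obtain u where u: "\<forall>i<s. 1 \<le> u i \<and> u i \<le> r" "(\<Sum>i<s. u i) = R + 1"
    using exists_bounded_composition[of s "R + 1" r] \<open>R < s * r\<close> by auto
  let ?e = "profile_matrix s u :: nat \<Rightarrow> nat \<Rightarrow> 'a"
  have "?e \<in> mat_space s r" "nrt_weight s r ?e = R + 1"
    using u by (simp_all add: profile_matrix_in_mat_space nrt_weight_profile_matrix)
  then obtain c where "decoding_weights {..<s} R (\<lambda>i. row_weight r (c i - c0 i))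
      (\<lambda>i. row_weight r (?e i)) (\<lambda>i. row_weight r ((\<lambda>j. c0 i j + ?e i j) - c i))"
    using perfect_code_decoding[OF pc c0] by blast
  then interpret decoding_weights "{..<s}" R "\<lambda>i. row_weight r (c i - c0 i)"
      "\<lambda>i. row_weight r (?e i)" "\<lambda>i. row_weight r ((\<lambda>j. c0 i j + ?e i j) - c i)" .
  have e_weight: "row_weight r (?e i) = u i" if "i < s" for i
    using u that by (simp add: row_weight_profile_matrix)
  have "0 < s" using \<open>2 \<le> s\<close> by simp
  have no_zero_rows: "{i \<in> {..<s}. row_weight r (?e i) = 0} = {}"
    using u e_weight by fastforce
  have row0: "0 \<in> {..<s}" "row_weight r (?e 0) \<noteq> 0"
    using u e_weight \<open>0 < s\<close> by auto
  from weight_off_error_support[OF row0] have "R + 1 \<le> row_weight r (c 0 - c0 0)"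
    unfolding no_zero_rows by simp
  also have "\<dots> \<le> u 0"
    using weight_le_error[OF row0] e_weight \<open>0 < s\<close> by simp
  also have "u 0 + (s - 1) \<le> R + 1"
  proof -
    have "s - 1 \<le> sum u ({..<s} - {0})"
      using sum_bounded_below[of "{..<s} - {0}" 1 u] u \<open>0 < s\<close> by (simp add: card_Diff_singleton)
    moreover have "sum u {..<s} = sum u ({..<s} - {0}) + u 0"
      using \<open>0 < s\<close> by (simp add: sum.remove)
    ultimately show ?thesis using u(2) \<open>0 < s\<close> by simp
  qed
  finally show False using \<open>2 \<le> s\<close> by linarith
qed

lemma perfect_code_unit_column_error:
  fixes C :: "(nat \<Rightarrow> nat \<Rightarrow> 'a::{ab_group_add,zero_neq_one}) set"
  assumes pc: "perfect_code s r R C" and c0: "c0 \<in> C" and "1 \<le> r"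
    and P: "P \<subseteq> {..<s}" "card P = R + 1" and tight: "r * (s - (R + 1)) \<le> R"
  obtains c where "c \<in> C"
    "\<And>i. i \<in> P \<Longrightarrow> c i - c0 i = profile_matrix s (\<lambda>i. of_bool (i \<in> P)) i"
    "\<And>i. i \<in> {..<s} - P \<Longrightarrow> row_weight r (c i - c0 i) = r"
proof -
  define u :: "nat \<Rightarrow> nat" where "u = (\<lambda>i. of_bool (i \<in> P))"
  let ?e = "profile_matrix s u :: nat \<Rightarrow> nat \<Rightarrow> 'a"
  let ?x = "\<lambda>i j. c0 i j + ?e i j"
  have u_le: "u i \<le> r" for i using \<open>1 \<le> r\<close> by (simp add: u_def)
  have e_weight: "row_weight r (?e i) = u i" if "i < s" for i
    using that u_le by (simp add: row_weight_profile_matrix)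
  have "(\<Sum>i<s. u i) = R + 1" using P by (simp add: u_def Int_absorb1)
  then have e: "?e \<in> mat_space s r" "nrt_weight s r ?e = R + 1"
    using u_le by (simp_all add: profile_matrix_in_mat_space nrt_weight_profile_matrix)
  obtain c where c: "c \<in> C" and weights: "decoding_weights {..<s} R (\<lambda>i. row_weight r (c i - c0 i))
      (\<lambda>i. row_weight r (?e i)) (\<lambda>i. row_weight r (?x i - c i))"
    using perfect_code_decoding[OF pc c0 e] by blast
  interpret decoding_weights "{..<s}" R "\<lambda>i. row_weight r (c i - c0 i)"
      "\<lambda>i. row_weight r (?e i)" "\<lambda>i. row_weight r (?x i - c i)"
    by (fact weights)
  let ?m = "\<lambda>i. row_weight r (c i - c0 i)"
  define Z where "Z = {..<s} - P"
  have Z_eq: "{i \<in> {..<s}. row_weight r (?e i) = 0} = Z"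
    using e_weight by (auto simp: Z_def u_def)
  obtain k where "k \<in> P" using P(2) by fastforce
  then have k: "k \<in> {..<s}" "row_weight r (?e k) \<noteq> 0"
    using P(1) e_weight by (auto simp: u_def)
  have "R \<le> sum ?m Z"
    using weight_off_error_support[OF k] weight_le_error[OF k] e_weight \<open>k \<in> P\<close> P(1)
    unfolding Z_eq by (auto simp: u_def)
  moreover have "sum ?m Z \<le> sum (\<lambda>_. r) Z"
    by (intro sum_mono) (simp add: row_weight_le)
  moreover have "sum (\<lambda>_. r) Z \<le> R"
    using P tight finite_subset[OF P(1)] by (simp add: Z_def card_Diff_subset mult.commute)
  ultimately have weight_Z: "R \<le> sum ?m Z" "sum ?m Z = sum (\<lambda>_. r) Z" by linarith+
  show ?thesis
  proof (rule that[OF c])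
    fix i assume "i \<in> P"
    then have "row_weight r (?x i - c i) = 0"
      using decoding_vanishes_on_error_support[of i] weight_Z(1) P(1) e_weight Z_eq
      by (auto simp: u_def)
    moreover have "?x \<in> mat_space s r" "c \<in> mat_space s r"
      using pc c0 c e(1) unfolding perfect_code_def mat_space_def by auto
    ultimately have "?x i = c i" by (rule mat_space_row_eqI[rotated 2])
    then show "c i - c0 i = profile_matrix s (\<lambda>i. of_bool (i \<in> P)) i"
      by (simp add: fun_eq_iff u_def flip: \<open>?x i = c i\<close>)
  next
    fix i assume "i \<in> {..<s} - P"
    then show "?m i = r"
      using sum_mono_inv[OF weight_Z(2)] by (simp add: Z_def row_weight_le)
  qed
qed

lemma perfect_code_radius_lt_tail:
  fixes C :: "(nat \<Rightarrow> nat \<Rightarrow> 'a::{ab_group_add,zero_neq_one}) set"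
  assumes pc: "perfect_code s r R C" and c0: "c0 \<in> C" and "2 \<le> r" "R + 1 < s"
  shows "R < r * (s - (R + 1))"
proof (rule ccontr)
  assume "\<not> ?thesis"
  then have tight: "r * (s - (R + 1)) \<le> R" by simp
  define P P' where "P = {..R}" and "P' = {1..R + 1}"
  have P: "P \<subseteq> {..<s}" "card P = R + 1" "P' \<subseteq> {..<s}" "card P' = R + 1"
    using \<open>R + 1 < s\<close> by (auto simp: P_def P'_def)
  obtain c where c: "c \<in> C"
    "\<And>i. i \<in> P \<Longrightarrow> c i - c0 i = profile_matrix s (\<lambda>i. of_bool (i \<in> P)) i"
    "\<And>i. i \<in> {..<s} - P \<Longrightarrow> row_weight r (c i - c0 i) = r"
    using perfect_code_unit_column_error[OF pc c0 _ P(1,2) tight] \<open>2 \<le> r\<close> by auto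
  obtain c' where c': "c' \<in> C"
    "\<And>i. i \<in> P' \<Longrightarrow> c' i - c0 i = profile_matrix s (\<lambda>i. of_bool (i \<in> P')) i"
    "\<And>i. i \<in> {..<s} - P' \<Longrightarrow> row_weight r (c' i - c0 i) = r"
    using perfect_code_unit_column_error[OF pc c0 _ P(3,4) tight] \<open>2 \<le> r\<close> by auto
  let ?m = "\<lambda>i. row_weight r (c i - c' i)"
  have "0 \<in> P" "0 \<in> {..<s} - P'" using \<open>R + 1 < s\<close> by (auto simp: P_def P'_def)
  then have "row_weight r (c 0 - c0 0) = 1" "row_weight r (c' 0 - c0 0) = r"
    using c(2) c'(3) \<open>2 \<le> r\<close> P(1) by (auto simp: row_weight_profile_matrix)
  then have "c \<noteq> c'" using \<open>2 \<le> r\<close> by auto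
  have common_rows: "?m i = 0" if "i \<in> P \<inter> P'" for i
  proof -
    have "c i - c0 i = c' i - c0 i"
      using that c(2) c'(2) by (auto simp: profile_matrix_def)
    then have "c i = c' i" by (simp add: fun_eq_iff)
    then show ?thesis by simp
  qed
  have "1 \<le> s - (R + 1)" using \<open>R + 1 < s\<close> by linarith
  then have "r \<le> r * (s - (R + 1))" by simp
  then have "?m 0 \<le> R" using row_weight_le[of r "c 0 - c' 0"] tight by linarith
  then have "sum ?m {0} \<le> R" by simp
  moreover have "sum ?m ({..<s} - {0}) = sum ?m ({..<s} - P)"
    by (rule sum.mono_neutral_right) (use common_rows in \<open>auto simp: P_def P'_def\<close>)
  moreover have "\<dots> \<le> card ({..<s} - P) * r"
    using sum_bounded_above[of "{..<s} - P" ?m r] by (simp add: row_weight_le)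
  moreover have "card ({..<s} - P) * r \<le> R"
    using P(1,2) tight finite_subset[OF P(1)] by (simp add: card_Diff_subset mult.commute)
  ultimately have "splittable R ?m {..<s}"
    unfolding splittable_def by (intro exI[of _ "{0}"]) (use \<open>R + 1 < s\<close> in auto)
  with perfect_code_diff_not_splittable[OF pc c(1) c'(1) \<open>c \<noteq> c'\<close>] show False
    by contradiction
qed

theorem mainTheorem10:
  fixes C :: "(nat \<Rightarrow> nat \<Rightarrow> 'a::{field,finite}) set"
    and s r R :: nat
  assumes "s \<ge> 2" and "r \<ge> 2" and "R \<ge> 1"
    and "perfect_code s r R C"
    and "nontrivial_code s r C"
  shows "(R + 1) * (r + 1) \<le> s * r"
proof -
  have "1 < card C" using assms(5) by (simp add: nontrivial_code_def)
  then obtain c c' where c: "c \<in> C" "c' \<in> C" "c \<noteq> c'"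
    using card_le_Suc0_iff_eq[of C] card.infinite[of C] by fastforce
  have "R < s * r" using perfect_code_radius_lt_size[OF assms(4) c] .
  then have "R + 1 < s" using perfect_code_radius_lt_rows[OF assms(4) c(1) assms(1)] by blast
  then have "R < r * (s - (R + 1))" using perfect_code_radius_lt_tail[OF assms(4) c(1) assms(2)] by blast
  moreover have "r * (s - (R + 1)) + r * (R + 1) = s * r"
    using \<open>R + 1 < s\<close> by (metis add_mult_distrib2 le_add_diff_inverse2 less_imp_le mult.commute)
  ultimately show ?thesis by (simp add: algebra_simps)
qed

end
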